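(* Let $k$ be a field of characteristic $\neq 2$, let $\mathcal O$ be the Lie algebra described in the context, and let $\mathcal I$ be a closed ideal of $\mathcal O$ with $J=J_{\mathcal I}=q(t)k[t]\neq 0$. Put $w_i=v_iq(t)$, $i=0,1,2$. Then $\mathcal I$ is one of the following ideals: (a) $\mathcal I=\mathcal OJt(t-1)\oplus k(w_0t\pm w_1t)\oplus k(w_0(t-1)\pm w_2(t-1))$ (four possibilities, the two signs chosen independently); (b) $\mathcal I=\mathcal OJt(t-1)\oplus\bigl(\bigoplus_{i=0}^2kw_it\bigr)\oplus k(w_0(t-1)\pm w_2(t-1))$ (two possibilities); in this case $\mathcal I=\mathcal OJt\oplus k(w_0\pm w_2)$; (c) $\mathcal I=\mathcal OJt(t-1)\oplus k(w_0t\pm w_1t)\oplus\bigl(\bigoplus_{i=0}^2kw_i(t-1)\bigr)$ (two possibilities); in this case $\mathcal I=\mathcal OJ(t-1)\oplus k(w_0\pm w_1)$; (d) $\mathcal I=\mathcal OJ$.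
   Context: $\mathcal O$ is the Lie algebra over $k$ which is a free $k[t]$-module with basis $v_0,v_1,v_2$, with $k[t]$-bilinear bracket determined by $[v_0,v_1]=-v_2(t-1)$, $[v_1,v_2]=-v_0$, $[v_2,v_0]=v_1t$ (it is isomorphic to the Onsager algebra). An ideal $\mathcal I$ of $\mathcal O$ is closed if $\{x\in\mathcal O:[x,\mathcal O]\subseteq\mathcal I\}=\mathcal I$. For an ideal $\mathcal I$, $J_{\mathcal I}=\{p(t)\in k[t]: v_0p(t)+v_1p_1(t)+v_2p_2(t)\in\mathcal I\text{ for some }p_1,p_2\in k[t]\}$ (an ideal of $k[t]$). For an ideal $J$ of $k[t]$, $\mathcal OJ=v_0J\oplus v_1J\oplus v_2J$, and $\mathcal OJt$, $\mathcal OJ(t-1)$, $\mathcal OJt(t-1)$ denote $\mathcal O$ applied to the ideals $Jt$, $J(t-1)$, $Jt(t-1)$. *)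

theory Defs
  imports "HOL-Computational_Algebra.Polynomial"
begin

text \<open>Elements of the Onsager-type Lie algebra O: triples (p0,p1,p2) standing for
  v0 p0 + v1 p1 + v2 p2, a free k[t]-module with basis v0, v1, v2.\<close>

type_synonym 'a onsager = "'a poly \<times> 'a poly \<times> 'a poly"

definition tt :: "'a::comm_ring_1 poly" where "tt = [:0, 1:]"

definition oadd :: "'a::comm_ring_1 onsager \<Rightarrow> 'a onsager \<Rightarrow> 'a onsager" where
  "oadd x y = (fst x + fst y, fst (snd x) + fst (snd y), snd (snd x) + snd (snd y))"

definition oscale :: "'a::comm_ring_1 \<Rightarrow> 'a onsager \<Rightarrow> 'a onsager" where
  "oscale c x = (smult c (fst x), smult c (fst (snd x)), smult c (snd (snd x)))"

definition ozero :: "'a::comm_ring_1 onsager" where "ozero = (0, 0, 0)"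

text \<open>k[t]-bilinear bracket with [v0,v1] = -v2(t-1), [v1,v2] = -v0, [v2,v0] = v1 t.\<close>
definition obr :: "'a::comm_ring_1 onsager \<Rightarrow> 'a onsager \<Rightarrow> 'a onsager" where
  "obr x y = (case x of (a0, a1, a2) \<Rightarrow> case y of (b0, b1, b2) \<Rightarrow>
     ( - (a1 * b2 - a2 * b1),
       tt * (a2 * b0 - a0 * b2),
       - ((tt - 1) * (a0 * b1 - a1 * b0))))"

definition lie_ideal :: "'a::comm_ring_1 onsager set \<Rightarrow> bool" where
  "lie_ideal I \<longleftrightarrow> ozero \<in> I \<and> (\<forall>x\<in>I. \<forall>y\<in>I. oadd x y \<in> I) \<and>
     (\<forall>c. \<forall>x\<in>I. oscale c x \<in> I) \<and> (\<forall>x\<in>I. \<forall>y. obr x y \<in> I)"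

definition closed_ideal :: "'a::comm_ring_1 onsager set \<Rightarrow> bool" where
  "closed_ideal I \<longleftrightarrow> lie_ideal I \<and> {x. \<forall>y. obr x y \<in> I} = I"

definition J_of :: "'a::comm_ring_1 onsager set \<Rightarrow> 'a poly set" where
  "J_of I = {p. \<exists>p1 p2. (p, p1, p2) \<in> I}"

definition pideal :: "'a::comm_ring_1 poly \<Rightarrow> 'a poly set" where
  "pideal p = {p * r | r. True}"

definition OJ :: "'a::comm_ring_1 poly set \<Rightarrow> 'a onsager set" where
  "OJ J = {(a, b, c) | a b c. a \<in> J \<and> b \<in> J \<and> c \<in> J}"

definition osum :: "'a::comm_ring_1 onsager set \<Rightarrow> 'a onsager set \<Rightarrow> 'a onsager set" where
  "osum A B = {oadd x y | x y. x \<in> A \<and> y \<in> B}"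

definition kspan :: "'a::comm_ring_1 onsager \<Rightarrow> 'a onsager set" where
  "kspan w = {oscale c w | c. True}"

end

theory Submission
  imports Defs "HOL-Library.Product_Plus"
begin

text \<open>A closed ideal I is a k[t]-submodule of O, because [p x, y] = [x, p y]. Bracketing with
  v1 and v2 moves every coordinate of an element of I into the v0-slot, so I \<subseteq> O q; bracketing
  an element v0 q + v1 p1 + v2 p2 twice shows O q t (t - 1) \<subseteq> I. By the Chinese remainder theorem
  for t (t - 1), I is therefore determined by the images A0, A1 \<subseteq> k^3 of q^-1 I under evaluation
  at t = 0 and t = 1. These are closed ideals of the three-dimensional Lie algebras O/(t - s)O,
  whose bracket is obr_at s, and both contain a vector with v0-coordinate 1.

  At t = 0 we have [(u, 0, w), v1] = (w, 0, u); so a closed ideal containing some (u, 0, w) with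
  u^2 \<noteq> w^2 contains k v0 + k v2 = [L, L], hence everything. Otherwise it lies in the line
  k (v0 \<plusminus> v2) spanned by its vector with v0-coordinate 1. The case t = 1 is carried to t = 0 by the
  automorphism v0 \<mapsto> -v0, v1 \<leftrightarrow> v2, t \<mapsto> 1 - t of O. The four combinations of A0 and A1 are the
  ideals (a) to (d).\<close>

section \<open>The k[t]-module O and evaluation at t = 0 and t = 1\<close>

definition omult :: "'a::comm_ring_1 poly \<Rightarrow> 'a onsager \<Rightarrow> 'a onsager" where
  "omult p x = (p * fst x, p * fst (snd x), p * snd (snd x))"

definition oconst :: "'a::comm_ring_1 \<times> 'a \<times> 'a \<Rightarrow> 'a onsager" where
  "oconst a = ([:fst a:], [:fst (snd a):], [:snd (snd a):])"

definition oeval :: "'a::comm_ring_1 \<Rightarrow> 'a onsager \<Rightarrow> 'a \<times> 'a \<times> 'a" where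
  "oeval s x = (poly (fst x) s, poly (fst (snd x)) s, poly (snd (snd x)) s)"

definition vscale :: "'a::comm_ring_1 \<Rightarrow> 'a \<times> 'a \<times> 'a \<Rightarrow> 'a \<times> 'a \<times> 'a" where
  "vscale c a = (c * fst a, c * fst (snd a), c * snd (snd a))"

definition obr_at :: "'a::comm_ring_1 \<Rightarrow> 'a \<times> 'a \<times> 'a \<Rightarrow> 'a \<times> 'a \<times> 'a \<Rightarrow> 'a \<times> 'a \<times> 'a" where
  "obr_at s a b = (case a of (a0, a1, a2) \<Rightarrow> case b of (b0, b1, b2) \<Rightarrow>
     (- (a1 * b2 - a2 * b1), s * (a2 * b0 - a0 * b2), - ((s - 1) * (a0 * b1 - a1 * b0))))"

lemma oadd_eq_add: "oadd x y = x + y"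
  by (simp add: oadd_def prod_eq_iff)

lemma ozero_eq_zero: "ozero = 0"
  by (simp add: ozero_def zero_prod_def)

lemma oscale_eq_omult: "oscale c x = omult [:c:] x"
  by (simp add: oscale_def omult_def)

lemma omult_add: "omult p (x + y) = omult p x + omult p y"
  by (simp add: omult_def algebra_simps)

lemma omult_diff: "omult p (x - y) = omult p x - omult p y"
  by (simp add: omult_def algebra_simps)

lemma omult_omult: "omult p (omult r x) = omult (p * r) x"
  by (simp add: omult_def mult.assoc)

lemma omult_commute: "omult p (omult r x) = omult r (omult p x)"
  by (simp add: omult_def mult.left_commute)

lemma omult_0 [simp]: "omult p 0 = 0"
  by (simp add: omult_def zero_prod_def)

lemma omult_1 [simp]: "omult 1 x = x"
  by (simp add: omult_def)

lemma obr_omult_left: "obr (omult p x) y = omult p (obr x y)"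
  by (cases x; cases y) (simp add: obr_def omult_def algebra_simps)

lemma obr_omult_right: "obr x (omult p y) = omult p (obr x y)"
  by (cases x; cases y) (simp add: obr_def omult_def algebra_simps)

lemma oeval_0 [simp]: "oeval s 0 = 0"
  by (simp add: oeval_def zero_prod_def)

lemma oeval_add: "oeval s (x + y) = oeval s x + oeval s y"
  by (simp add: oeval_def)

lemma oeval_diff: "oeval s (x - y) = oeval s x - oeval s y"
  by (simp add: oeval_def)

lemma oeval_omult: "oeval s (omult p x) = vscale (poly p s) (oeval s x)"
  by (simp add: oeval_def omult_def vscale_def)

lemma oeval_oconst: "oeval s (oconst a) = a"
  by (simp add: oeval_def oconst_def)

lemma poly_tt [simp]: "poly tt s = s"
  by (simp add: tt_def)

lemma oeval_obr: "oeval s (obr x y) = obr_at s (oeval s x) (oeval s y)"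
  by (cases x; cases y) (simp add: obr_def obr_at_def oeval_def algebra_simps)

lemma vscale_1 [simp]: "vscale 1 a = a"
  and vscale_0 [simp]: "vscale 0 a = 0"
  by (simp_all add: vscale_def zero_prod_def)

lemma obr_at_zero_left [simp]: "obr_at s 0 b = 0"
  by (cases b) (simp add: obr_at_def zero_prod_def)

lemma range_omult: "range (omult p) = {x. p dvd fst x \<and> p dvd fst (snd x) \<and> p dvd snd (snd x)}"
proof (intro set_eqI iffI)
  fix x assume "x \<in> {x. p dvd fst x \<and> p dvd fst (snd x) \<and> p dvd snd (snd x)}"
  then obtain r0 r1 r2 where "x = (p * r0, p * r1, p * r2)"
    by (cases x) (auto elim!: dvdE)
  then show "x \<in> range (omult p)"
    by (auto simp: omult_def intro: range_eqI[where x = "(r0, r1, r2)"])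
qed (auto simp: omult_def)

lemma tt_dvd_iff: "tt dvd (g :: 'a::field poly) \<longleftrightarrow> poly g 0 = 0"
  by (simp add: poly_eq_0_iff_dvd tt_def)

lemma tt_minus_1_dvd_iff: "tt - 1 dvd (g :: 'a::field poly) \<longleftrightarrow> poly g 1 = 0"
  by (simp add: poly_eq_0_iff_dvd tt_def one_pCons)

lemma tt_mult_tt_minus_1_dvd_iff:
  "tt * (tt - 1) dvd (g :: 'a::field poly) \<longleftrightarrow> poly g 0 = 0 \<and> poly g 1 = 0"
proof
  assume roots: "poly g 0 = 0 \<and> poly g 1 = 0"
  then obtain h where g: "g = tt * h"
    by (auto simp: tt_dvd_iff[symmetric])
  with roots have "poly h 1 = 0"
    by simp
  then show "tt * (tt - 1) dvd g"
    unfolding g by (intro mult_dvd_mono) (simp_all add: tt_minus_1_dvd_iff)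
next
  assume "tt * (tt - 1) dvd g"
  then have "tt dvd g" "tt - 1 dvd g"
    by (auto intro: dvd_mult_left dvd_mult_right)
  then show "poly g 0 = 0 \<and> poly g 1 = 0"
    by (simp add: tt_dvd_iff tt_minus_1_dvd_iff)
qed

lemma range_omult_tt: "range (omult tt) = {f. oeval 0 f = (0 :: 'a::field \<times> 'a \<times> 'a)}"
  by (simp add: range_omult tt_dvd_iff oeval_def zero_prod_def)

lemma range_omult_tt_minus_1: "range (omult (tt - 1)) = {f. oeval 1 f = (0 :: 'a::field \<times> 'a \<times> 'a)}"
  by (simp add: range_omult tt_minus_1_dvd_iff oeval_def zero_prod_def)

lemma range_omult_tt_tt_minus_1:
  "range (omult (tt * (tt - 1))) = {f. oeval 0 f = 0 \<and> oeval 1 f = (0 :: 'a::field \<times> 'a \<times> 'a)}"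
  by (auto simp: range_omult tt_mult_tt_minus_1_dvd_iff oeval_def zero_prod_def)

definition eval_preimage ::
  "'a::comm_ring_1 poly \<Rightarrow> (('a \<times> 'a \<times> 'a) \<times> ('a \<times> 'a \<times> 'a)) set \<Rightarrow> 'a onsager set" where
  "eval_preimage q S = omult q ` {f. (oeval 0 f, oeval 1 f) \<in> S}"

section \<open>Closed ideals of O/tO and O/(t - 1)O\<close>

definition closed_ideal_at :: "'a::comm_ring_1 \<Rightarrow> ('a \<times> 'a \<times> 'a) set \<Rightarrow> bool" where
  "closed_ideal_at s A \<longleftrightarrow> (\<forall>a\<in>A. \<forall>b\<in>A. a + b \<in> A) \<and> (\<forall>c. \<forall>a\<in>A. vscale c a \<in> A) \<and>
     (\<forall>a\<in>A. \<forall>b. obr_at s a b \<in> A) \<and> (\<forall>a. (\<forall>b. obr_at s a b \<in> A) \<longrightarrow> a \<in> A)"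

lemma
  assumes "closed_ideal_at s A"
  shows closed_ideal_at_add: "a \<in> A \<Longrightarrow> b \<in> A \<Longrightarrow> a + b \<in> A"
    and closed_ideal_at_vscale: "a \<in> A \<Longrightarrow> vscale c a \<in> A"
    and closed_ideal_at_obr_at: "a \<in> A \<Longrightarrow> obr_at s a b \<in> A"
    and closed_ideal_at_closure: "(\<And>b. obr_at s a b \<in> A) \<Longrightarrow> a \<in> A"
  using assms unfolding closed_ideal_at_def by blast+

lemma closed_ideal_at_0_eq_UNIV:
  fixes A :: "('a::field \<times> 'a \<times> 'a) set"
  assumes A: "closed_ideal_at 0 A" and uw: "(u, 0, w) \<in> A" and nondeg: "u\<^sup>2 \<noteq> w\<^sup>2"
  shows "A = UNIV"
proof -
  have "obr_at 0 (u, 0, w) (0, 1, 0) \<in> A"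
    using A uw by (rule closed_ideal_at_obr_at)
  then have wu: "(w, 0, u) \<in> A"
    by (simp add: obr_at_def)
  have N: "(x, 0, z) \<in> A" for x z
  proof -
    define d where "d = u\<^sup>2 - w\<^sup>2"
    have "d \<noteq> 0"
      using nondeg by (simp add: d_def)
    moreover have "(x * u - z * w) * u + (z * u - x * w) * w = x * d"
      and "(x * u - z * w) * w + (z * u - x * w) * u = z * d"
      by (simp_all add: d_def algebra_simps power2_eq_square)
    ultimately have "vscale ((x * u - z * w) / d) (u, 0, w) + vscale ((z * u - x * w) / d) (w, 0, u) = (x, 0, z)"
      by (simp add: vscale_def add_divide_distrib[symmetric])
    moreover have "vscale ((x * u - z * w) / d) (u, 0, w) + vscale ((z * u - x * w) / d) (w, 0, u) \<in> A"
      using uw wu by (intro closed_ideal_at_add[OF A] closed_ideal_at_vscale[OF A])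
    ultimately show ?thesis
      by simp
  qed
  have "a \<in> A" for a
  proof -
    have "obr_at 0 a b \<in> A" for b
      using N by (cases a; cases b) (simp add: obr_at_def)
    then show ?thesis
      by (rule closed_ideal_at_closure[OF A])
  qed
  then show ?thesis
    by blast
qed

lemma closed_ideal_at_0_cases:
  fixes A :: "('a::field \<times> 'a \<times> 'a) set"
  assumes A: "closed_ideal_at 0 A" and a: "(1, a1, a2) \<in> A"
  shows "A = UNIV \<or> (\<exists>s\<in>{1, -1}. A = range (\<lambda>c. (c, 0, c * s)))"
proof (cases "A = UNIV")
  case False
  then have iso: "u\<^sup>2 = w\<^sup>2" if "(u, 0, w) \<in> A" for u w
    using closed_ideal_at_0_eq_UNIV[OF A that] by blast
  have mid: "b1 = 0" if "(b0, b1, b2) \<in> A" for b0 b1 b2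
  proof -
    have "obr_at 0 (b0, b1, b2) (1, 0, 0) \<in> A"
      using A that by (rule closed_ideal_at_obr_at)
    then show ?thesis
      using iso by (fastforce simp: obr_at_def)
  qed
  with a have "a1 = 0"
    by blast
  with a iso[of 1 a2] have "a2 \<in> {1, -1}"
    by (simp add: power2_eq_1_iff[of a2] eq_commute[of 1])
  moreover have "A = range (\<lambda>c. (c, 0, c * a2))"
  proof (intro set_eqI iffI)
    fix b assume b: "b \<in> A"
    then obtain b0 b2 where b_eq: "b = (b0, 0, b2)"
      using mid by (cases b) fastforce
    have "b + vscale (- b0) (1, a1, a2) \<in> A"
      using a b by (intro closed_ideal_at_add[OF A] closed_ideal_at_vscale[OF A])
    then have "(0, 0, b2 - b0 * a2) \<in> A"
      by (simp add: b_eq vscale_def \<open>a1 = 0\<close>)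
    then have "b2 = b0 * a2"
      using iso by fastforce
    then show "b \<in> range (\<lambda>c. (c, 0, c * a2))"
      by (simp add: b_eq image_iff)
  next
    fix b :: "'a \<times> 'a \<times> 'a"
    assume "b \<in> range (\<lambda>c. (c, 0, c * a2))"
    then obtain c where "b = vscale c (1, a1, a2)"
      by (auto simp: vscale_def \<open>a1 = 0\<close>)
    then show "b \<in> A"
      using A a by (simp add: closed_ideal_at_vscale)
  qed
  ultimately show ?thesis
    by blast
qed simp

text \<open>Induced by the automorphism v0 \<mapsto> -v0, v1 \<leftrightarrow> v2, t \<mapsto> 1 - t of O, which exchanges
  O/tO and O/(t - 1)O.\<close>

definition mirror :: "'a::comm_ring_1 \<times> 'a \<times> 'a \<Rightarrow> 'a \<times> 'a \<times> 'a" where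
  "mirror a = (- fst a, snd (snd a), fst (snd a))"

lemma mirror_mirror [simp]: "mirror (mirror a) = a"
  by (simp add: mirror_def)

lemma obr_at_1_mirror: "obr_at 1 (mirror a) (mirror b) = mirror (obr_at 0 a b)"
  by (cases a; cases b) (simp add: obr_at_def mirror_def algebra_simps)

lemma mirror_add: "mirror (a + b) = mirror a + mirror b"
  by (simp add: mirror_def)

lemma mirror_vscale: "mirror (vscale c a) = vscale c (mirror a)"
  by (simp add: mirror_def vscale_def)

lemma closed_ideal_at_0_mirror:
  assumes A: "closed_ideal_at 1 A"
  shows "closed_ideal_at 0 (mirror -` A)"
  unfolding closed_ideal_at_def
proof (intro conjI ballI allI impI)
  fix a b
  assume "a \<in> mirror -` A" "b \<in> mirror -` A"
  then show "a + b \<in> mirror -` A"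
    using closed_ideal_at_add[OF A] by (simp add: mirror_add)
next
  fix a c
  assume "a \<in> mirror -` A"
  then show "vscale c a \<in> mirror -` A"
    using closed_ideal_at_vscale[OF A] by (simp add: mirror_vscale)
next
  fix a b
  assume "a \<in> mirror -` A"
  then show "obr_at 0 a b \<in> mirror -` A"
    using closed_ideal_at_obr_at[OF A] by (simp add: obr_at_1_mirror[symmetric])
next
  fix a
  assume "\<forall>b. obr_at 0 a b \<in> mirror -` A"
  then have "obr_at 1 (mirror a) b \<in> A" for b
    by (metis mirror_mirror obr_at_1_mirror vimage_eq)
  then show "a \<in> mirror -` A"
    using closed_ideal_at_closure[OF A] by blast
qed

lemma vimage_mirror_line:
  "mirror -` range (\<lambda>c. (c, 0, c * s)) = range (\<lambda>c. (c, c * - s, 0 :: 'a::comm_ring_1))"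
proof (intro set_eqI)
  fix x :: "'a \<times> 'a \<times> 'a"
  show "x \<in> mirror -` range (\<lambda>c. (c, 0, c * s)) \<longleftrightarrow> x \<in> range (\<lambda>c. (c, c * - s, 0))"
    by (cases x) (auto simp: mirror_def image_iff)
qed

lemma closed_ideal_at_1_cases:
  fixes A :: "('a::field \<times> 'a \<times> 'a) set"
  assumes A: "closed_ideal_at 1 A" and a: "(1, a1, a2) \<in> A"
  shows "A = UNIV \<or> (\<exists>s\<in>{1, -1}. A = range (\<lambda>c. (c, c * s, 0)))"
proof -
  have "vscale (-1) (1, a1, a2) \<in> A"
    using A a by (rule closed_ideal_at_vscale)
  then have "(1, - a2, - a1) \<in> mirror -` A"
    by (simp add: mirror_def vscale_def)
  then have "mirror -` A = UNIV \<or> (\<exists>s\<in>{1, -1}. mirror -` A = range (\<lambda>c. (c, 0, c * s)))"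
    using closed_ideal_at_0_cases closed_ideal_at_0_mirror[OF A] by blast
  moreover have A_eq: "A = mirror -` (mirror -` A)"
    by (simp add: vimage_def)
  ultimately show ?thesis
  proof (elim disjE bexE)
    assume "mirror -` A = UNIV"
    then show ?thesis
      by (subst A_eq) simp
  next
    fix s :: 'a
    assume "s \<in> {1, -1}" and line: "mirror -` A = range (\<lambda>c. (c, 0, c * s))"
    have "A = range (\<lambda>c. (c, c * - s, 0))"
      by (subst A_eq) (simp add: line vimage_mirror_line)
    moreover have "- s \<in> {1, -1}"
      using \<open>s \<in> {1, -1}\<close> by auto
    ultimately show ?thesis
      by blast
  qed
qed

section \<open>Closed ideals of O\<close>

locale closed_onsager_ideal =
  fixes I :: "'a::field onsager set" and q :: "'a poly"
  assumes closed: "closed_ideal I"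
    and J_of_I: "J_of I = pideal q"
    and q_nonzero: "q \<noteq> 0"
begin

lemma zero_mem: "0 \<in> I"
  and add_mem: "x \<in> I \<Longrightarrow> y \<in> I \<Longrightarrow> x + y \<in> I"
  and obr_mem: "x \<in> I \<Longrightarrow> obr x y \<in> I"
  and mem_if_obr_mem: "(\<And>y. obr x y \<in> I) \<Longrightarrow> x \<in> I"
  using closed unfolding closed_ideal_def lie_ideal_def ozero_eq_zero oadd_eq_add by blast+

lemma omult_mem: "x \<in> I \<Longrightarrow> omult p x \<in> I"
  by (rule mem_if_obr_mem) (simp add: obr_omult_left obr_omult_right[symmetric] obr_mem)

lemma fst_mem_iff_dvd: "(\<exists>p1 p2. (p, p1, p2) \<in> I) \<longleftrightarrow> q dvd p"
proof -
  have "(\<exists>p1 p2. (p, p1, p2) \<in> I) \<longleftrightarrow> p \<in> J_of I"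
    by (simp add: J_of_def)
  also have "\<dots> \<longleftrightarrow> q dvd p"
    by (auto simp: J_of_I pideal_def)
  finally show ?thesis .
qed

lemma q_dvd_fst: "x \<in> I \<Longrightarrow> q dvd fst x"
  using fst_mem_iff_dvd by (cases x) auto

lemma subset_range_omult_q: "I \<subseteq> range (omult q)"
proof
  fix x
  assume x_mem: "x \<in> I"
  obtain a0 a1 a2 where x: "x = (a0, a1, a2)"
    by (cases x)
  have "q dvd a0"
    using q_dvd_fst[OF x_mem] by (simp add: x)
  moreover have "q dvd a1"
    using q_dvd_fst[OF obr_mem[OF x_mem, of "(0, 0, -1)"]] by (simp add: x obr_def)
  moreover have "q dvd a2"
    using q_dvd_fst[OF obr_mem[OF x_mem, of "(0, 1, 0)"]] by (simp add: x obr_def)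
  ultimately show "x \<in> range (omult q)"
    by (simp add: x range_omult)
qed

lemma q_mem: "\<exists>p1 p2. (q, p1, p2) \<in> I"
  by (simp add: fst_mem_iff_dvd)

lemma omult_q_mem_if_vanishing:
  assumes "oeval 0 g = 0" "oeval 1 g = 0"
  shows "omult q g \<in> I"
proof -
  define m where "m = q * tt * (tt - 1)"
  obtain p1 p2 where x: "(q, p1, p2) \<in> I"
    using q_mem by blast
  have e2: "(0, 0, m) \<in> I"
    using obr_mem[OF obr_mem[OF x, of "(0, 0, 1)"], of "(-1, 0, 0)"]
    by (simp add: m_def obr_def algebra_simps)
  have e1: "(0, m, 0) \<in> I"
    using obr_mem[OF obr_mem[OF x, of "(0, 1, 0)"], of "(-1, 0, 0)"]
    by (simp add: m_def obr_def algebra_simps)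
  have e0: "(m, 0, 0) \<in> I"
    using obr_mem[OF e1, of "(0, 0, -1)"] by (simp add: obr_def)
  have "g \<in> range (omult (tt * (tt - 1)))"
    using assms by (simp add: range_omult_tt_tt_minus_1)
  then obtain h where "g = omult (tt * (tt - 1)) h"
    by blast
  then have "omult q g = omult (fst h) (m, 0, 0) + omult (fst (snd h)) (0, m, 0) + omult (snd (snd h)) (0, 0, m)"
    by (simp add: omult_def m_def algebra_simps)
  then show ?thesis
    using e0 e1 e2 by (simp add: add_mem omult_mem)
qed

definition fibre :: "'a \<Rightarrow> ('a \<times> 'a \<times> 'a) set" where
  "fibre s = oeval s ` {f. omult q f \<in> I}"

lemma omult_q_mem_iff: "omult q f \<in> I \<longleftrightarrow> oeval 0 f \<in> fibre 0 \<and> oeval 1 f \<in> fibre 1"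
proof
  assume "oeval 0 f \<in> fibre 0 \<and> oeval 1 f \<in> fibre 1"
  then obtain g0 g1 where g0: "omult q g0 \<in> I" "oeval 0 g0 = oeval 0 f"
    and g1: "omult q g1 \<in> I" "oeval 1 g1 = oeval 1 f"
    by (auto simp: fibre_def)
  define h where "h = omult (1 - tt) g0 + omult tt g1"
  have "omult q h \<in> I"
    using g0 g1 by (simp add: h_def omult_add omult_commute[of q] add_mem omult_mem)
  moreover have "omult q (f - h) \<in> I"
    by (rule omult_q_mem_if_vanishing) (simp_all add: h_def oeval_diff oeval_add oeval_omult g0 g1)
  ultimately have "omult q h + omult q (f - h) \<in> I"
    by (rule add_mem)
  then show "omult q f \<in> I"
    by (simp add: omult_diff)
qed (auto simp: fibre_def)

lemma eq_eval_preimage: "I = eval_preimage q (fibre 0 \<times> fibre 1)"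
  unfolding eval_preimage_def using subset_range_omult_q omult_q_mem_iff by blast

lemma fibre_add:
  assumes "a \<in> fibre s" "b \<in> fibre s"
  shows "a + b \<in> fibre s"
proof -
  obtain f g where "omult q f \<in> I" "a = oeval s f" "omult q g \<in> I" "b = oeval s g"
    using assms by (auto simp: fibre_def)
  then have "omult q (f + g) \<in> I" "a + b = oeval s (f + g)"
    by (simp_all add: omult_add oeval_add add_mem)
  then show ?thesis
    unfolding fibre_def by blast
qed

lemma fibre_vscale:
  assumes "a \<in> fibre s"
  shows "vscale c a \<in> fibre s"
proof -
  obtain f where "omult q f \<in> I" "a = oeval s f"
    using assms by (auto simp: fibre_def)
  then have "omult q (omult [:c:] f) \<in> I" "vscale c a = oeval s (omult [:c:] f)"
    by (simp_all add: omult_commute[of q] omult_mem oeval_omult)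
  then show ?thesis
    unfolding fibre_def by blast
qed

lemma fibre_obr_at:
  assumes "a \<in> fibre s"
  shows "obr_at s a b \<in> fibre s"
proof -
  obtain f where "omult q f \<in> I" "a = oeval s f"
    using assms by (auto simp: fibre_def)
  then have "omult q (obr f (oconst b)) \<in> I" "obr_at s a b = oeval s (obr f (oconst b))"
    by (simp_all add: obr_omult_left[symmetric] obr_mem oeval_obr oeval_oconst)
  then show ?thesis
    unfolding fibre_def by blast
qed

lemma zero_mem_fibre: "0 \<in> fibre s"
proof -
  have "omult q 0 \<in> I" "0 = oeval s 0"
    by (simp_all add: zero_mem)
  then show ?thesis
    unfolding fibre_def by blast
qed

lemma omult_q_mem_if_obr_at_mem:
  assumes "\<And>b. obr_at 0 (oeval 0 f) b \<in> fibre 0" and "\<And>b. obr_at 1 (oeval 1 f) b \<in> fibre 1"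
  shows "omult q f \<in> I"
proof (rule mem_if_obr_mem)
  fix y
  have "omult q (obr f y) \<in> I"
    using assms by (simp add: omult_q_mem_iff oeval_obr)
  then show "obr (omult q f) y \<in> I"
    by (simp add: obr_omult_left)
qed

lemma fibre_closure:
  assumes s: "s \<in> {0, 1}" and a: "\<And>b. obr_at s a b \<in> fibre s"
  shows "a \<in> fibre s"
proof -
  define f where "f = omult (if s = 0 then 1 - tt else tt) (oconst a)"
  have "oeval s f = a" "oeval (1 - s) f = 0"
    using s by (auto simp: f_def oeval_omult oeval_oconst)
  then have "omult q f \<in> I"
    using s a by (intro omult_q_mem_if_obr_at_mem) (auto simp: zero_mem_fibre)
  then show ?thesis
    using \<open>oeval s f = a\<close> unfolding fibre_def by blast
qed

lemma closed_ideal_at_fibre: "s \<in> {0, 1} \<Longrightarrow> closed_ideal_at s (fibre s)"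
  unfolding closed_ideal_at_def using fibre_add fibre_vscale fibre_obr_at fibre_closure by blast

lemma fibre_first_coord_1: "\<exists>a1 a2. (1, a1, a2) \<in> fibre s"
proof -
  obtain p1 p2 where x: "(q, p1, p2) \<in> I"
    using q_mem by blast
  then obtain f where f: "(q, p1, p2) = omult q f"
    using subset_range_omult_q by blast
  then have "fst f = 1"
    using q_nonzero by (simp add: omult_def)
  moreover have "oeval s f \<in> fibre s"
    using x f unfolding fibre_def by auto
  ultimately show ?thesis
    by (auto simp: oeval_def)
qed

lemma fibre_0_cases: "fibre 0 = UNIV \<or> (\<exists>s\<in>{1, -1}. fibre 0 = range (\<lambda>c. (c, 0, c * s)))"
  using fibre_first_coord_1 closed_ideal_at_0_cases closed_ideal_at_fibre[of 0] by blast

lemma fibre_1_cases: "fibre 1 = UNIV \<or> (\<exists>s\<in>{1, -1}. fibre 1 = range (\<lambda>c. (c, c * s, 0)))"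
  using fibre_first_coord_1 closed_ideal_at_1_cases closed_ideal_at_fibre[of 1] by blast

end

section \<open>The ideals (a) to (d)\<close>

lemma osum_assoc: "osum A (osum B C) = osum (osum A B) C"
proof (intro set_eqI iffI)
  fix x
  assume "x \<in> osum A (osum B C)"
  then obtain a b c where "a \<in> A" "b \<in> B" "c \<in> C" "x = (a + b) + c"
    unfolding osum_def oadd_eq_add by (auto simp: add.assoc)
  then show "x \<in> osum (osum A B) C"
    unfolding osum_def oadd_eq_add by blast
next
  fix x
  assume "x \<in> osum (osum A B) C"
  then obtain a b c where "a \<in> A" "b \<in> B" "c \<in> C" "x = a + (b + c)"
    unfolding osum_def oadd_eq_add by (auto simp: add.assoc)
  then show "x \<in> osum A (osum B C)"
    unfolding osum_def oadd_eq_add by blast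
qed

lemma OJ_pideal: "OJ (pideal p) = range (omult p)"
  unfolding OJ_def pideal_def range_omult dvd_def by auto

lemma OJ_pideal_mult: "OJ (pideal (q * p)) = omult q ` range (omult p)"
  by (simp add: OJ_pideal omult_omult image_image)

lemma osum_eval_preimage_kspan:
  "osum (eval_preimage q S) (kspan (omult q (omult p (oconst a)))) =
     eval_preimage q {(x, y). \<exists>c. (x - vscale (c * poly p 0) a, y - vscale (c * poly p 1) a) \<in> S}"
  (is "?lhs = ?rhs")
proof (intro set_eqI iffI)
  fix z
  assume "z \<in> ?lhs"
  then obtain f c where f: "(oeval 0 f, oeval 1 f) \<in> S"
    and z: "z = omult q f + oscale c (omult q (omult p (oconst a)))"
    unfolding osum_def kspan_def eval_preimage_def oadd_eq_add by blast
  have "z = omult q (f + omult (smult c p) (oconst a))"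
    by (simp add: z omult_add oscale_eq_omult omult_commute[of q] omult_omult)
  moreover have "oeval s (f + omult (smult c p) (oconst a)) - vscale (c * poly p s) a = oeval s f" for s
    by (simp add: oeval_add oeval_omult oeval_oconst)
  then have "f + omult (smult c p) (oconst a)
      \<in> {g. \<exists>c. (oeval 0 g - vscale (c * poly p 0) a, oeval 1 g - vscale (c * poly p 1) a) \<in> S}"
    using f by (auto intro: exI[of _ c])
  ultimately show "z \<in> ?rhs"
    unfolding eval_preimage_def by blast
next
  fix z
  assume "z \<in> ?rhs"
  then obtain f c where f: "(oeval 0 f - vscale (c * poly p 0) a, oeval 1 f - vscale (c * poly p 1) a) \<in> S"
    and z: "z = omult q f"
    unfolding eval_preimage_def by blast
  have "z = omult q (f - omult (smult c p) (oconst a)) + oscale c (omult q (omult p (oconst a)))"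
    by (simp add: z omult_diff oscale_eq_omult omult_commute[of q] omult_omult)
  moreover have "oeval s (f - omult (smult c p) (oconst a)) = oeval s f - vscale (c * poly p s) a" for s
    by (simp add: oeval_diff oeval_omult oeval_oconst)
  then have "omult q (f - omult (smult c p) (oconst a)) \<in> eval_preimage q S"
    using f unfolding eval_preimage_def by auto
  moreover have "oscale c (omult q (omult p (oconst a))) \<in> kspan (omult q (omult p (oconst a)))"
    unfolding kspan_def by blast
  ultimately show "z \<in> ?lhs"
    unfolding osum_def oadd_eq_add by blast
qed

lemma
  fixes q :: "'a::field poly"
  shows OJ_pideal_eq_eval_preimage: "OJ (pideal q) = eval_preimage q UNIV"
    and OJ_pideal_tt_eq_eval_preimage: "OJ (pideal (q * tt)) = eval_preimage q ({0} \<times> UNIV)"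
    and OJ_pideal_tt_minus_1_eq_eval_preimage: "OJ (pideal (q * (tt - 1))) = eval_preimage q (UNIV \<times> {0})"
    and OJ_pideal_tt_tt_minus_1_eq_eval_preimage:
      "OJ (pideal (q * tt * (tt - 1))) = eval_preimage q {(0, 0)}"
  using OJ_pideal_mult[of q 1] OJ_pideal_mult[of q tt] OJ_pideal_mult[of q "tt - 1"]
    OJ_pideal_mult[of q "tt * (tt - 1)"]
  by (simp_all add: eval_preimage_def range_omult_tt range_omult_tt_minus_1 mult.assoc
      range_omult_tt_tt_minus_1)

lemma omult_omult_oconst:
  "omult q (omult p (oconst (a0, a1, a2))) = (smult a0 (q * p), smult a1 (q * p), smult a2 (q * p))"
  by (simp add: omult_def oconst_def)

lemma ideal_a_eq_eval_preimage:
  fixes q :: "'a::field poly"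
  shows "osum (OJ (pideal (q * tt * (tt - 1))))
      (osum (kspan (q * tt, smult s1 (q * tt), 0)) (kspan (q * (tt - 1), 0, smult s2 (q * (tt - 1)))))
    = eval_preimage q (range (\<lambda>c. (c, 0, c * s2)) \<times> range (\<lambda>c. (c, c * s1, 0)))"
proof -
  have gens: "(q * tt, smult s1 (q * tt), 0) = omult q (omult tt (oconst (1, s1, 0)))"
    "(q * (tt - 1), 0, smult s2 (q * (tt - 1))) = omult q (omult (tt - 1) (oconst (1, 0, s2)))"
    by (simp_all add: omult_omult_oconst)
  show ?thesis
    unfolding gens osum_assoc OJ_pideal_tt_tt_minus_1_eq_eval_preimage osum_eval_preimage_kspan
    by (intro arg_cong[where f = "eval_preimage q"]) (auto simp: vscale_def add_eq_0_iff image_iff)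
qed

lemma ideal_b_eq_eval_preimage:
  fixes q :: "'a::field poly"
  shows "osum (OJ (pideal (q * tt * (tt - 1))))
      (osum (osum (kspan (q * tt, 0, 0)) (osum (kspan (0, q * tt, 0)) (kspan (0, 0, q * tt))))
        (kspan (q * (tt - 1), 0, smult s (q * (tt - 1)))))
    = eval_preimage q (range (\<lambda>c. (c, 0, c * s)) \<times> UNIV)"
proof -
  have gens: "(q * tt, 0, 0) = omult q (omult tt (oconst (1, 0, 0)))"
    "(0, q * tt, 0) = omult q (omult tt (oconst (0, 1, 0)))"
    "(0, 0, q * tt) = omult q (omult tt (oconst (0, 0, 1)))"
    "(q * (tt - 1), 0, smult s (q * (tt - 1))) = omult q (omult (tt - 1) (oconst (1, 0, s)))"
    by (simp_all add: omult_omult_oconst)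
  show ?thesis
    unfolding gens osum_assoc OJ_pideal_tt_tt_minus_1_eq_eval_preimage osum_eval_preimage_kspan
    by (intro arg_cong[where f = "eval_preimage q"]) (auto simp: vscale_def add_eq_0_iff image_iff)
qed

lemma ideal_b_eq_eval_preimage':
  fixes q :: "'a::field poly"
  shows "osum (OJ (pideal (q * tt))) (kspan (q, 0, smult s q))
    = eval_preimage q (range (\<lambda>c. (c, 0, c * s)) \<times> UNIV)"
proof -
  have gen: "(q, 0, smult s q) = omult q (omult 1 (oconst (1, 0, s)))"
    using omult_omult_oconst[of q 1] by simp
  show ?thesis
    unfolding gen OJ_pideal_tt_eq_eval_preimage osum_eval_preimage_kspan
    by (intro arg_cong[where f = "eval_preimage q"]) (auto simp: vscale_def add_eq_0_iff image_iff)
qed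

lemma ideal_c_eq_eval_preimage:
  fixes q :: "'a::field poly"
  shows "osum (OJ (pideal (q * tt * (tt - 1))))
      (osum (kspan (q * tt, smult s (q * tt), 0))
        (osum (kspan (q * (tt - 1), 0, 0)) (osum (kspan (0, q * (tt - 1), 0)) (kspan (0, 0, q * (tt - 1))))))
    = eval_preimage q (UNIV \<times> range (\<lambda>c. (c, c * s, 0)))"
proof -
  have gens: "(q * tt, smult s (q * tt), 0) = omult q (omult tt (oconst (1, s, 0)))"
    "(q * (tt - 1), 0, 0) = omult q (omult (tt - 1) (oconst (1, 0, 0)))"
    "(0, q * (tt - 1), 0) = omult q (omult (tt - 1) (oconst (0, 1, 0)))"
    "(0, 0, q * (tt - 1)) = omult q (omult (tt - 1) (oconst (0, 0, 1)))"
    by (simp_all add: omult_omult_oconst)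
  show ?thesis
    unfolding gens osum_assoc OJ_pideal_tt_tt_minus_1_eq_eval_preimage osum_eval_preimage_kspan
    by (intro arg_cong[where f = "eval_preimage q"]) (auto simp: vscale_def add_eq_0_iff image_iff)
qed

lemma ideal_c_eq_eval_preimage':
  fixes q :: "'a::field poly"
  shows "osum (OJ (pideal (q * (tt - 1)))) (kspan (q, smult s q, 0))
    = eval_preimage q (UNIV \<times> range (\<lambda>c. (c, c * s, 0)))"
proof -
  have gen: "(q, smult s q, 0) = omult q (omult 1 (oconst (1, s, 0)))"
    using omult_omult_oconst[of q 1] by simp
  show ?thesis
    unfolding gen OJ_pideal_tt_minus_1_eq_eval_preimage osum_eval_preimage_kspan
    by (intro arg_cong[where f = "eval_preimage q"]) (auto simp: vscale_def add_eq_0_iff image_iff)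
qed

theorem proposition4p10:
  fixes I :: "('a::field) onsager set" and q :: "'a poly"
  assumes char: "(2::'a) \<noteq> 0"
    and cl: "closed_ideal I"
    and J: "J_of I = pideal q"
    and nz: "pideal q \<noteq> {0}"
  shows
   "(\<exists>s1 s2. s1 \<in> {1, -1} \<and> s2 \<in> {1, -1} \<and>
       I = osum (OJ (pideal (q * tt * (tt - 1))))
             (osum (kspan (q * tt, smult s1 (q * tt), 0))
                   (kspan (q * (tt - 1), 0, smult s2 (q * (tt - 1))))))
    \<or> (\<exists>s. s \<in> {1, -1} \<and>
       I = osum (OJ (pideal (q * tt * (tt - 1))))
             (osum (osum (kspan (q * tt, 0, 0)) (osum (kspan (0, q * tt, 0)) (kspan (0, 0, q * tt))))
                   (kspan (q * (tt - 1), 0, smult s (q * (tt - 1))))) \<and>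
       I = osum (OJ (pideal (q * tt))) (kspan (q, 0, smult s q)))
    \<or> (\<exists>s. s \<in> {1, -1} \<and>
       I = osum (OJ (pideal (q * tt * (tt - 1))))
             (osum (kspan (q * tt, smult s (q * tt), 0))
                   (osum (kspan (q * (tt - 1), 0, 0)) (osum (kspan (0, q * (tt - 1), 0)) (kspan (0, 0, q * (tt - 1)))))) \<and>
       I = osum (OJ (pideal (q * (tt - 1)))) (kspan (q, smult s q, 0)))
    \<or> I = OJ (pideal q)"
proof -
  interpret closed_onsager_ideal I q
    using cl J nz by unfold_locales (auto simp: pideal_def)
  \<comment> \<open>The fibres are generalised away, since they mention I and would make rewriting with I loop.\<close>
  obtain A0 A1 where I: "I = eval_preimage q (A0 \<times> A1)"
    and A0: "A0 = UNIV \<or> (\<exists>s\<in>{1, -1}. A0 = range (\<lambda>c. (c, 0, c * s)))"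
    and A1: "A1 = UNIV \<or> (\<exists>s\<in>{1, -1}. A1 = range (\<lambda>c. (c, c * s, 0)))"
    by (rule that[OF eq_eval_preimage fibre_0_cases fibre_1_cases])
  from A0 A1 show ?thesis
    unfolding I ideal_a_eq_eval_preimage ideal_b_eq_eval_preimage ideal_b_eq_eval_preimage'
      ideal_c_eq_eval_preimage ideal_c_eq_eval_preimage'
    \<comment> \<open>only now, lest it rewrite the OJ-summands of (a) to (c) first\<close>
    unfolding OJ_pideal_eq_eval_preimage
    by (elim disjE bexE) auto
qed

end
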